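(* Let $\alpha\in(0,1)$. (i) Let $m\ge 2$ be even and $A=\{a_1,\dots,a_m\}$. Let $\mathcal E$ be the election with two agents whose preferences are $$\sigma_1:\ a_1\succ\!\!\succ a_2\succ\!\!\succ\cdots\succ\!\!\succ a_{m/2+1}\succ a_{m/2+2}\succ\cdots\succ a_m,$$ $$\sigma_2:\ a_{m/2+1}\succ a_{m/2+2}\succ\cdots\succ a_m\succ a_1\succ\cdots\succ a_{m/2}.$$ Then $$\mathsf{dist}_\alpha(a_1,\mathcal E)=\frac{1+2\alpha^{m/2}-\alpha^m}{\alpha^m+1}.$$ (ii) If $m\ge 3$ is odd, there exists an election $\mathcal E'$ with $m$ alternatives, including an alternative $a_1$, such that $$\mathsf{dist}_\alpha(a_1,\mathcal E')=\frac{1+2\alpha^{(m-1)/2}-\alpha^{m-1}}{\alpha^{m-1}+1}.$$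
   Context: A preference $\sigma_i=(\pi_i,\Join_i)$ is a ranking $\pi_i:[m]\to A$ (a bijection, $\pi_i(1)$ most preferred) together with $\Join_i:[m-1]\to\{\succ,\succ\!\!\succ\}$. The displayed chains list $\pi_i(1),\pi_i(2),\dots$ with the symbol $\Join_i(j)$ between positions $j$ and $j+1$. A metric $d$ on agents and alternatives is nonnegative and symmetric, satisfies the triangle inequality, and has $d(x,x)=0$. The profile is $\alpha$-consistent with $d$ (mandatory elicitation) if for all $i$ and $j\in[m-1]$: - $\Join_i(j)=\,\succ$ implies $d(i,\pi_i(j+1))\ge d(i,\pi_i(j))>\alpha d(i,\pi_i(j+1))$; - $\Join_i(j)=\,\succ\!\!\succ$ implies $d(i,\pi_i(j))\le\alpha d(i,\pi_i(j+1))$. $\mathsf{dist}_\alpha(a,\mathcal E)=\sup_d\sum_i d(i,a)/\min_b\sum_i d(i,b)$, with the supremum over general metrics $d$ with which the profile is $\alpha$-consistent. *)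

theory Defs
  imports "HOL-Analysis.Analysis" "HOL-Library.Extended_Real"
begin

text \<open>Points of the metric space: agents (Inl i) and alternatives (Inr a).
  A preference of agent i is a ranking rk i :: nat => 'alt on positions 1..m
  (rk i 1 most preferred) together with J i j (True = strong separator, False = weak)
  for positions j in 1..m-1.\<close>

definition pseudo_metric_on :: "'p set \<Rightarrow> ('p \<Rightarrow> 'p \<Rightarrow> real) \<Rightarrow> bool" where
  "pseudo_metric_on S d \<longleftrightarrow>
     (\<forall>x\<in>S. \<forall>y\<in>S. d x y \<ge> 0 \<and> d x y = d y x) \<and>
     (\<forall>x\<in>S. d x x = 0) \<and>
     (\<forall>x\<in>S. \<forall>y\<in>S. \<forall>z\<in>S. d x z \<le> d x y + d y z)"

definition election :: "'ag set \<Rightarrow> 'alt set \<Rightarrow> nat \<Rightarrow> ('ag \<Rightarrow> nat \<Rightarrow> 'alt) \<Rightarrow> bool" where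
  "election N A m rk \<longleftrightarrow> finite N \<and> N \<noteq> {} \<and> finite A \<and> card A = m \<and>
     (\<forall>i\<in>N. bij_betw (rk i) {1..m} A)"

definition alpha_consistent ::
  "real \<Rightarrow> 'ag set \<Rightarrow> nat \<Rightarrow> ('ag \<Rightarrow> nat \<Rightarrow> 'alt) \<Rightarrow> ('ag \<Rightarrow> nat \<Rightarrow> bool)
     \<Rightarrow> ('ag + 'alt \<Rightarrow> 'ag + 'alt \<Rightarrow> real) \<Rightarrow> bool" where
  "alpha_consistent \<alpha> N m rk J d \<longleftrightarrow>
     (\<forall>i\<in>N. \<forall>j\<in>{1..m-1}.
        (\<not> J i j \<longrightarrow> d (Inl i) (Inr (rk i (j+1))) \<ge> d (Inl i) (Inr (rk i j)) \<and>
                       d (Inl i) (Inr (rk i j)) > \<alpha> * d (Inl i) (Inr (rk i (j+1)))) \<and>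
        (J i j \<longrightarrow> d (Inl i) (Inr (rk i j)) \<le> \<alpha> * d (Inl i) (Inr (rk i (j+1)))))"

definition social_cost :: "'ag set \<Rightarrow> ('ag + 'alt \<Rightarrow> 'ag + 'alt \<Rightarrow> real) \<Rightarrow> 'alt \<Rightarrow> real" where
  "social_cost N d a = (\<Sum>i\<in>N. d (Inl i) (Inr a))"

definition dist_alpha ::
  "real \<Rightarrow> 'ag set \<Rightarrow> 'alt set \<Rightarrow> ('ag \<Rightarrow> nat \<Rightarrow> 'alt) \<Rightarrow> ('ag \<Rightarrow> nat \<Rightarrow> bool) \<Rightarrow> 'alt \<Rightarrow> ereal" where
  "dist_alpha \<alpha> N A rk J a =
     (SUP d \<in> {d. pseudo_metric_on (Inl ` N \<union> Inr ` A) d \<and> alpha_consistent \<alpha> N (card A) rk J d}.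
        ereal (social_cost N d a / Min (social_cost N d ` A)))"

text \<open>The election of part (i): agents 1 and 2, alternatives a_k = k for k in 1..m.\<close>
definition ex_pi :: "nat \<Rightarrow> nat \<Rightarrow> nat \<Rightarrow> nat" where
  "ex_pi m i k = (if i = 1 then k else (if k \<le> m div 2 then k + m div 2 else k - m div 2))"

definition ex_J :: "nat \<Rightarrow> nat \<Rightarrow> nat \<Rightarrow> bool" where
  "ex_J m i j = (i = 1 \<and> j \<le> m div 2)"

end

theory Submission
  imports Defs
begin

text \<open>Write \<open>m = 2 h + e\<close> with \<open>e \<le> 1\<close> and \<open>t = \<alpha> ^ h\<close>, and let \<open>x k\<close>, \<open>y k\<close> be the
  distances of agents 1 and 2 to alternative \<open>k\<close>. The \<open>h\<close> strong separators of agent 1 give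
  \<open>x 1 \<le> t x (h + 1)\<close>, the \<open>h\<close> weak separators of agent 2 give \<open>t y 1 \<le> y (h + 1)\<close>, and the
  triangle inequality gives \<open>y 1 \<le> y (h + 1) + x (h + 1) + x 1\<close>. These three linear constraints
  force \<open>x 1 + y 1 \<le> (1 + 2 t - t\<^sup>2) / (1 + t\<^sup>2) \<cdot> (x (h + 1) + y (h + 1))\<close>, and the rankings
  make every alternative at least as costly as alternative 1 or alternative \<open>h + 1\<close>. Conversely,
  a one-parameter family of metrics in the max-norm plane makes all three constraints tight in the
  limit, so the bound is the supremum.\<close>

definition agent_consistent :: "real \<Rightarrow> nat \<Rightarrow> (nat \<Rightarrow> bool) \<Rightarrow> (nat \<Rightarrow> real) \<Rightarrow> bool" where
  "agent_consistent \<alpha> m J \<delta> \<longleftrightarrow>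
     (\<forall>j\<in>{1..m-1}. (\<not> J j \<longrightarrow> \<delta> j \<le> \<delta> (Suc j) \<and> \<alpha> * \<delta> (Suc j) < \<delta> j) \<and>
                   (J j \<longrightarrow> \<delta> j \<le> \<alpha> * \<delta> (Suc j)))"

lemma alpha_consistent_iff_agent_consistent:
  "alpha_consistent \<alpha> N m rk J d \<longleftrightarrow>
     (\<forall>i\<in>N. agent_consistent \<alpha> m (J i) (\<lambda>k. d (Inl i) (Inr (rk i k))))"
  unfolding alpha_consistent_def agent_consistent_def by simp

lemma agent_consistent_cong:
  assumes "\<And>k. k \<in> {1..m} \<Longrightarrow> \<delta> k = \<delta>' k" and "\<And>j. j \<in> {1..m-1} \<Longrightarrow> J j = J' j"
  shows "agent_consistent \<alpha> m J \<delta> \<longleftrightarrow> agent_consistent \<alpha> m J' \<delta>'"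
proof -
  have "\<delta> j = \<delta>' j \<and> \<delta> (Suc j) = \<delta>' (Suc j) \<and> J j = J' j" if "j \<in> {1..m-1}" for j
    using assms that by auto
  then show ?thesis unfolding agent_consistent_def by (metis (no_types, lifting))
qed

lemma agent_consistent_mono:
  assumes cons: "agent_consistent \<alpha> m J \<delta>" and "\<alpha> \<le> 1"
    and nonneg: "\<And>k. k \<in> {1..m} \<Longrightarrow> 0 \<le> \<delta> k"
    and "1 \<le> p" "p \<le> q" "q \<le> m"
  shows "\<delta> p \<le> \<delta> q"
  using \<open>p \<le> q\<close> \<open>q \<le> m\<close>
proof (induction q rule: dec_induct)
  case (step n)
  have n: "n \<in> {1..m-1}" using step \<open>1 \<le> p\<close> by auto
  have "\<delta> n \<le> \<delta> (Suc n)"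
  proof (cases "J n")
    case True
    then have "\<delta> n \<le> \<alpha> * \<delta> (Suc n)" using cons n unfolding agent_consistent_def by blast
    also have "\<dots> \<le> \<delta> (Suc n)"
      using mult_right_mono[OF \<open>\<alpha> \<le> 1\<close> nonneg[of "Suc n"]] step by simp
    finally show ?thesis .
  qed (use cons n in \<open>auto simp: agent_consistent_def\<close>)
  then show ?case using step by simp
qed simp

lemma agent_consistent_strong_chain:
  assumes cons: "agent_consistent \<alpha> m J \<delta>" and "0 \<le> \<alpha>"
    and strong: "\<And>j. p \<le> j \<Longrightarrow> j < q \<Longrightarrow> J j"
    and "1 \<le> p" "p \<le> q" "q \<le> m"
  shows "\<delta> p \<le> \<alpha> ^ (q - p) * \<delta> q"
  using \<open>p \<le> q\<close> \<open>q \<le> m\<close>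
proof (induction q rule: dec_induct)
  case (step n)
  have "n \<in> {1..m-1}" using step \<open>1 \<le> p\<close> by auto
  then have "\<delta> n \<le> \<alpha> * \<delta> (Suc n)"
    using cons strong step unfolding agent_consistent_def by auto
  have "\<delta> p \<le> \<alpha> ^ (n - p) * \<delta> n" using step by simp
  also have "\<dots> \<le> \<alpha> ^ (n - p) * (\<alpha> * \<delta> (Suc n))"
    using \<open>\<delta> n \<le> \<alpha> * \<delta> (Suc n)\<close> \<open>0 \<le> \<alpha>\<close> by (simp add: mult_left_mono)
  also have "\<dots> = \<alpha> ^ (Suc n - p) * \<delta> (Suc n)"
    using \<open>p \<le> n\<close> by (simp add: Suc_diff_le)
  finally show ?case .
qed simp

lemma agent_consistent_weak_chain:
  assumes cons: "agent_consistent \<alpha> m J \<delta>" and "0 \<le> \<alpha>"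
    and weak: "\<And>j. p \<le> j \<Longrightarrow> j < q \<Longrightarrow> \<not> J j"
    and "1 \<le> p" "p \<le> q" "q \<le> m"
  shows "\<alpha> ^ (q - p) * \<delta> q \<le> \<delta> p"
  using \<open>p \<le> q\<close> \<open>q \<le> m\<close>
proof (induction q rule: dec_induct)
  case (step n)
  have "n \<in> {1..m-1}" using step \<open>1 \<le> p\<close> by auto
  then have "\<alpha> * \<delta> (Suc n) \<le> \<delta> n"
    using cons weak step unfolding agent_consistent_def by force
  have "\<alpha> ^ (Suc n - p) * \<delta> (Suc n) = \<alpha> ^ (n - p) * (\<alpha> * \<delta> (Suc n))"
    using \<open>p \<le> n\<close> by (simp add: Suc_diff_le)
  also have "\<dots> \<le> \<alpha> ^ (n - p) * \<delta> n"
    using \<open>\<alpha> * \<delta> (Suc n) \<le> \<delta> n\<close> \<open>0 \<le> \<alpha>\<close> by (simp add: mult_left_mono)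
  also have "\<dots> \<le> \<delta> p" using step by simp
  finally show ?case .
qed simp

lemma alpha_consistent_cong:
  assumes "\<And>i k. i \<in> N \<Longrightarrow> k \<in> {1..m} \<Longrightarrow> rk i k = rk' i k"
    and "\<And>i j. i \<in> N \<Longrightarrow> j \<in> {1..m-1} \<Longrightarrow> J i j = J' i j"
  shows "alpha_consistent \<alpha> N m rk J d \<longleftrightarrow> alpha_consistent \<alpha> N m rk' J' d"
  unfolding alpha_consistent_iff_agent_consistent
  using assms by (intro ball_cong refl agent_consistent_cong) auto

lemma dist_alpha_cong:
  assumes "\<And>i k. i \<in> N \<Longrightarrow> k \<in> {1..card A} \<Longrightarrow> rk i k = rk' i k"
    and "\<And>i j. i \<in> N \<Longrightarrow> j \<in> {1..card A - 1} \<Longrightarrow> J i j = J' i j"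
  shows "dist_alpha \<alpha> N A rk J a = dist_alpha \<alpha> N A rk' J' a"
  unfolding dist_alpha_def using alpha_consistent_cong[of N "card A" rk rk' J J' \<alpha>] assms by simp

definition linf_pullback :: "('p \<Rightarrow> real \<times> real) \<Rightarrow> 'p \<Rightarrow> 'p \<Rightarrow> real" where
  "linf_pullback f p q = max \<bar>fst (f p) - fst (f q)\<bar> \<bar>snd (f p) - snd (f q)\<bar>"

lemma pseudo_metric_on_linf_pullback: "pseudo_metric_on S (linf_pullback f)"
  unfolding pseudo_metric_on_def linf_pullback_def by (auto simp: abs_minus_commute)

lemma Min_ratio_le:
  fixes f :: "'a \<Rightarrow> real"
  assumes "finite A" "A \<noteq> {}" "0 \<le> V" and nonneg: "\<And>b. b \<in> A \<Longrightarrow> 0 \<le> f b"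
    and le: "\<And>b. b \<in> A \<Longrightarrow> f a \<le> V * f b"
  shows "f a / Min (f ` A) \<le> V"
proof -
  have "Min (f ` A) \<in> f ` A" using assms(1,2) by simp
  then obtain b where b: "b \<in> A" "Min (f ` A) = f b" by auto
  show ?thesis
  proof (cases "f b = 0")
    case False
    then have "0 < f b" using nonneg[OF b(1)] by simp
    then show ?thesis using le[OF b(1)] b(2) by (simp add: divide_le_eq)
  qed (use b \<open>0 \<le> V\<close> in simp)
qed

lemma SUP_ereal_eq_tendsto_at_right:
  fixes g :: "'a \<Rightarrow> real" and w :: "real \<Rightarrow> 'a"
  assumes upper: "\<And>x. x \<in> S \<Longrightarrow> g x \<le> V"
    and family: "\<And>s. a < s \<Longrightarrow> s < b \<Longrightarrow> w s \<in> S" and "a < b"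
    and lim: "((\<lambda>s. g (w s)) \<longlongrightarrow> V) (at_right a)"
  shows "(SUP x\<in>S. ereal (g x)) = ereal V"
proof (rule antisym)
  show "(SUP x\<in>S. ereal (g x)) \<le> ereal V" using upper by (auto intro: SUP_least)
  have "eventually (\<lambda>s. ereal (g (w s)) \<le> (SUP x\<in>S. ereal (g x))) (at_right a)"
    using eventually_at_right_real[OF \<open>a < b\<close>] by eventually_elim (auto intro: SUP_upper family)
  then show "ereal V \<le> (SUP x\<in>S. ereal (g x))"
    by (rule tendsto_upperbound[rotated]) (simp_all add: lim)
qed

definition distortion_bound :: "real \<Rightarrow> real" where
  "distortion_bound t = (1 + 2 * t - t\<^sup>2) / (t\<^sup>2 + 1)"

lemma distortion_bound_ge_one:
  assumes "0 \<le> t" "t \<le> 1"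
  shows "1 \<le> distortion_bound t"
proof -
  have "t\<^sup>2 \<le> t" using assms by (simp add: power2_eq_square mult_left_le_one_le)
  moreover have "0 < t\<^sup>2 + 1" by (simp add: add_nonneg_pos)
  ultimately show ?thesis by (simp add: distortion_bound_def le_divide_eq)
qed

lemma sum_le_distortion_bound:
  fixes t x y X Y :: real
  assumes "0 < t" "t < 1" "0 \<le> X" "0 \<le> Y"
    and x: "x \<le> t * X" and y: "t * y \<le> Y" and triangle: "y \<le> Y + X + x"
  shows "x + y \<le> distortion_bound t * (X + Y)"
proof -
  \<comment> \<open>Add the three constraints with multipliers \<open>2\<close>, \<open>2 t\<close> and \<open>1 - t\<^sup>2\<close>.\<close>
  have "(1 - t\<^sup>2) * y \<le> (1 - t\<^sup>2) * (Y + X + x)"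
    using triangle assms by (intro mult_left_mono) (auto simp: power_le_one)
  moreover have "2 * t * (t * y) \<le> 2 * t * Y" using y \<open>0 < t\<close> by simp
  ultimately have "(t\<^sup>2 + 1) * (x + y) \<le> 2 * x + (1 - t\<^sup>2) * (X + Y) + 2 * t * Y"
    by (simp add: algebra_simps power2_eq_square)
  also have "\<dots> \<le> (1 + 2 * t - t\<^sup>2) * (X + Y)"
    using x by (simp add: algebra_simps power2_eq_square)
  moreover have "0 < t\<^sup>2 + 1" by (simp add: add_nonneg_pos)
  ultimately show ?thesis by (simp add: distortion_bound_def le_divide_eq mult.commute)
qed

text \<open>\<open>two_block_rank h i k\<close> is the alternative agent \<open>i\<close> ranks \<open>k\<close>-th: agent 1 ranks
  \<open>1, \<dots>, 2 h\<close> and agent 2 ranks \<open>h + 1, \<dots>, 2 h, 1, \<dots>, h\<close>; strong separators follow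
  agent 1's first \<open>h\<close> positions and position \<open>2 h\<close> of both agents. For \<open>m = 2 h\<close> this is the
  election of part (i); for \<open>m = 2 h + 1\<close> it appends alternative \<open>2 h + 1\<close> at the bottom of
  both rankings.\<close>

definition two_block_rank :: "nat \<Rightarrow> nat \<Rightarrow> nat \<Rightarrow> nat" where
  "two_block_rank h i k = (if i = 1 \<or> 2 * h < k then k else if k \<le> h then k + h else k - h)"

definition two_block_sep :: "nat \<Rightarrow> nat \<Rightarrow> nat \<Rightarrow> bool" where
  "two_block_sep h i j \<longleftrightarrow> j = 2 * h \<or> (i = 1 \<and> j \<le> h)"

lemma two_block_rank_involution:
  "1 \<le> k \<Longrightarrow> two_block_rank h i (two_block_rank h i k) = k"
  by (auto simp: two_block_rank_def)

lemma bij_betw_two_block_rank: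
  assumes "2 * h \<le> n"
  shows "bij_betw (two_block_rank h i) {1..n} {1..n}"
proof -
  have "two_block_rank h i ` {1..n} \<subseteq> {1..n}"
    using assms by (auto simp: two_block_rank_def)
  then show ?thesis
    by (intro bij_betw_byWitness[where f' = "two_block_rank h i"]) (auto simp: two_block_rank_involution)
qed

locale two_block =
  fixes \<alpha> :: real and h e :: nat
  assumes alpha_pos: "0 < \<alpha>" and alpha_less_one: "\<alpha> < 1"
    and h_pos: "0 < h" and e_le_one: "e \<le> 1"
begin

abbreviation m :: nat where "m \<equiv> 2 * h + e"

abbreviation t :: real where "t \<equiv> \<alpha> ^ h"

lemma t_pos: "0 < t" and t_less_one: "t < 1"
  using alpha_pos alpha_less_one h_pos by (simp_all add: power_less_one_iff)

lemma two_block_rank_in_range: "k \<in> {1..m} \<Longrightarrow> two_block_rank h i k \<in> {1..m}"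
  using bij_betw_apply[OF bij_betw_two_block_rank[of h "m"]] by simp

context
  fixes d :: "nat + nat \<Rightarrow> nat + nat \<Rightarrow> real"
  assumes metric: "pseudo_metric_on (Inl ` {1, 2} \<union> Inr ` {1..m}) d"
    and consistent: "alpha_consistent \<alpha> {1, 2} m (two_block_rank h) (two_block_sep h) d"
begin

lemma agent_dist_nonneg: "i \<in> {1, 2} \<Longrightarrow> k \<in> {1..m} \<Longrightarrow> 0 \<le> d (Inl i) (Inr k)"
  using metric unfolding pseudo_metric_on_def by blast

lemma agent_consistent_two_block:
  "i \<in> {1, 2} \<Longrightarrow>
     agent_consistent \<alpha> m (two_block_sep h i) (\<lambda>k. d (Inl i) (Inr (two_block_rank h i k)))"
  using consistent unfolding alpha_consistent_iff_agent_consistent by blast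

lemma agent_dist_mono:
  assumes "i \<in> {1, 2}" "1 \<le> p" "p \<le> q" "q \<le> m"
  shows "d (Inl i) (Inr (two_block_rank h i p)) \<le> d (Inl i) (Inr (two_block_rank h i q))"
  using agent_consistent_mono[OF agent_consistent_two_block] assms alpha_less_one
    agent_dist_nonneg two_block_rank_in_range by simp

lemma cost_first_le_bound_cost_middle:
  "social_cost {1, 2} d 1 \<le> distortion_bound t * social_cost {1, 2} d (Suc h)"
proof -
  let ?x = "\<lambda>k. d (Inl 1) (Inr k)" and ?y = "\<lambda>k. d (Inl 2) (Inr k)"
  have strong: "?x 1 \<le> t * ?x (Suc h)"
    using agent_consistent_strong_chain[OF agent_consistent_two_block, of 1 1 "Suc h"]
      alpha_pos h_pos by (simp add: two_block_rank_def two_block_sep_def)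
  have weak: "t * ?y 1 \<le> ?y (Suc h)"
    using agent_consistent_weak_chain[OF agent_consistent_two_block, of 2 1 "Suc h"]
      alpha_pos h_pos by (simp add: two_block_rank_def two_block_sep_def)
  have triangle: "?y 1 \<le> ?y (Suc h) + ?x (Suc h) + ?x 1"
  proof -
    have in_S: "Inl 1 \<in> Inl ` {1, 2} \<union> Inr ` {1..m}" "Inl 2 \<in> Inl ` {1, 2} \<union> Inr ` {1..m}"
      "Inr 1 \<in> Inl ` {1, 2} \<union> Inr ` {1..m}" "Inr (Suc h) \<in> Inl ` {1, 2} \<union> Inr ` {1..m}"
      using h_pos by auto
    have "?y 1 \<le> ?y (Suc h) + d (Inr (Suc h)) (Inr 1)"
      "d (Inr (Suc h)) (Inr 1) \<le> d (Inr (Suc h)) (Inl 1) + ?x 1"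
      "d (Inr (Suc h)) (Inl 1) = ?x (Suc h)"
      using metric in_S unfolding pseudo_metric_on_def by blast+
    then show ?thesis by linarith
  qed
  have "0 \<le> ?x (Suc h)" "0 \<le> ?y (Suc h)" using agent_dist_nonneg h_pos by auto
  from sum_le_distortion_bound[OF t_pos t_less_one this strong weak triangle]
  show ?thesis by (simp add: social_cost_def add.commute)
qed

lemma cost_dominated:
  assumes b: "b \<in> {1..m}"
  shows "social_cost {1, 2} d 1 \<le> social_cost {1, 2} d b \<or>
    social_cost {1, 2} d (Suc h) \<le> social_cost {1, 2} d b"
proof -
  let ?x = "\<lambda>k. d (Inl 1) (Inr k)" and ?y = "\<lambda>k. d (Inl 2) (Inr k)"
  have x_mono: "?x p \<le> ?x q" if "1 \<le> p" "p \<le> q" "q \<le> m" for p q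
    using agent_dist_mono[of 1 p q] that by (simp add: two_block_rank_def)
  \<comment> \<open>Agent 2 ranks alternative \<open>b\<close> at position \<open>two_block_rank h 2 b\<close>, the rank being an involution.\<close>
  have y_mono: "?y (two_block_rank h 2 p) \<le> ?y b" if "1 \<le> p" "p \<le> two_block_rank h 2 b" for p
    using agent_dist_mono[of 2 p "two_block_rank h 2 b"] that b two_block_rank_in_range[OF b]
    by (simp add: two_block_rank_involution)
  consider "b \<le> h \<or> 2 * h < b" | "h < b" "b \<le> 2 * h" by linarith
  then show ?thesis
  proof cases
    case 1
    then have "?x 1 \<le> ?x b" "?y 1 \<le> ?y b"
      using x_mono[of 1 b] y_mono[of "Suc h"] b h_pos by (auto simp: two_block_rank_def)
    then show ?thesis by (simp add: social_cost_def)
  next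
    case 2
    then have "?x (Suc h) \<le> ?x b" "?y (Suc h) \<le> ?y b"
      using x_mono[of "Suc h" b] y_mono[of 1] b h_pos by (auto simp: two_block_rank_def)
    then show ?thesis by (simp add: social_cost_def)
  qed
qed

lemma cost_ratio_le_distortion_bound:
  "social_cost {1, 2} d 1 / Min (social_cost {1, 2} d ` {1..m}) \<le> distortion_bound t"
proof (rule Min_ratio_le)
  have bound: "1 \<le> distortion_bound t" using t_pos t_less_one by (simp add: distortion_bound_ge_one)
  then show "0 \<le> distortion_bound t" by simp
  show nonneg: "0 \<le> social_cost {1, 2} d b" if "b \<in> {1..m}" for b
    using agent_dist_nonneg that by (simp add: social_cost_def)
  show "social_cost {1, 2} d 1 \<le> distortion_bound t * social_cost {1, 2} d b"
    if b: "b \<in> {1..m}" for b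
    using cost_dominated[OF b]
  proof
    assume "social_cost {1, 2} d 1 \<le> social_cost {1, 2} d b"
    also have "\<dots> \<le> distortion_bound t * social_cost {1, 2} d b"
      using mult_right_mono[OF bound nonneg[OF b]] by simp
    finally show ?thesis .
  next
    assume "social_cost {1, 2} d (Suc h) \<le> social_cost {1, 2} d b"
    with bound have "distortion_bound t * social_cost {1, 2} d (Suc h)
        \<le> distortion_bound t * social_cost {1, 2} d b" by (simp add: mult_left_mono)
    with cost_first_le_bound_cost_middle show ?thesis by linarith
  qed
qed (use h_pos in auto)

end

text \<open>The near-extremal metrics live in the max-norm plane: agents 1 and 2 sit at \<open>(0, X + 1)\<close>
  and \<open>(X + 1, 0)\<close> with \<open>X = gap s\<close>, and alternative \<open>k\<close> at (its distance to agent 1, its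
  distance to agent 2). Agent 1 sees \<open>1, \<dots>, h + 1\<close> in geometric progression of ratio \<open>\<alpha>\<close>
  and \<open>h + 1, \<dots>, 2 h\<close> at distance \<open>X\<close> (the exponent \<open>h + 1 - k\<close> truncates to 0);
  agent 2 sees its first \<open>h + 1\<close> alternatives in progression of ratio \<open>s\<close>, so its weak
  separators become tight as \<open>s \<rightarrow> \<alpha>\<close>.\<close>

definition gap :: "real \<Rightarrow> real" where
  "gap s = (1 / s ^ h - 1) / (1 + t)"

definition remote :: "real \<Rightarrow> real" where
  "remote s = (gap s + 1 / s ^ h + 1) / \<alpha>"

definition witness_point :: "real \<Rightarrow> nat + nat \<Rightarrow> real \<times> real" where
  "witness_point s p = (case p of
      Inl i \<Rightarrow> if i = 1 then (0, gap s + 1) else (gap s + 1, 0)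
    | Inr k \<Rightarrow> if k \<le> 2 * h
        then (\<alpha> ^ (h + 1 - k) * gap s, if k \<le> h then 1 / s ^ h else 1 / s ^ (k - h - 1))
        else (remote s, remote s))"

context
  fixes s :: real
  assumes alpha_less_s: "\<alpha> < s" and s_less_one: "s < 1"
begin

lemma s_pos: "0 < s"
  using alpha_pos alpha_less_s by simp

lemma one_less_inverse_power: "1 < 1 / s ^ h"
  using s_pos s_less_one h_pos by (simp add: power_less_one_iff)

lemma inverse_power_eq_gap: "1 / s ^ h = gap s + t * gap s + 1"
proof -
  have "gap s * (1 + t) = 1 / s ^ h - 1" using t_pos unfolding gap_def by simp
  then show ?thesis by (simp add: algebra_simps)
qed

lemma gap_pos: "0 < gap s"
  using one_less_inverse_power t_pos unfolding gap_def by simp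

lemma alpha_mult_remote: "\<alpha> * remote s = gap s + 1 / s ^ h + 1"
  using alpha_pos unfolding remote_def by simp

lemma inverse_power_mono: "j \<le> h \<Longrightarrow> 1 \<le> 1 / s ^ j \<and> 1 / s ^ j \<le> 1 / s ^ h"
  using s_pos s_less_one
  by (simp add: power_le_one power_decreasing le_divide_eq divide_le_eq mult.commute)

lemma inverse_power_step: "1 / s ^ n \<le> 1 / s ^ Suc n \<and> \<alpha> * (1 / s ^ Suc n) < 1 / s ^ n"
  using s_pos s_less_one alpha_less_s
  by (simp add: divide_simps mult_left_le_one_le)

lemma witness_point_bounds:
  assumes k: "k \<in> {1..m}" and xy: "witness_point s (Inr k) = (x, y)"
  shows "0 \<le> x \<and> 0 \<le> y \<and> \<bar>x - y\<bar> \<le> gap s + 1 \<and> gap s + 1 \<le> x + y"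
proof -
  have tX: "0 \<le> t * gap s" "t * gap s \<le> gap s"
    using t_pos t_less_one gap_pos by simp_all
  consider "k \<le> h" | "h < k" "k \<le> 2 * h" | "2 * h < k" by linarith
  then show ?thesis
  proof cases
    case 1
    have "t \<le> \<alpha> ^ (h + 1 - k)" "\<alpha> ^ (h + 1 - k) \<le> 1"
      using alpha_pos alpha_less_one 1 k by (auto intro: power_decreasing power_le_one)
    then have "t * gap s \<le> x" "x \<le> gap s" "y = 1 / s ^ h"
      using xy 1 gap_pos unfolding witness_point_def by (auto intro: mult_right_mono mult_left_le_one_le)
    then show ?thesis using tX inverse_power_eq_gap gap_pos by (simp add: abs_le_iff)
  next
    case 2
    then have "x = gap s" "1 \<le> y" "y \<le> 1 / s ^ h"
      using xy inverse_power_mono[of "k - h - 1"] unfolding witness_point_def by auto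
    moreover have "y \<le> 2 * gap s + 1" using \<open>y \<le> 1 / s ^ h\<close> tX inverse_power_eq_gap by linarith
    ultimately show ?thesis using gap_pos by (simp add: abs_le_iff)
  next
    case 3
    then have "x = remote s" "y = remote s"
      using xy unfolding witness_point_def by auto
    moreover have "gap s + 1 \<le> remote s"
    proof -
      have "0 < remote s"
        using alpha_pos gap_pos one_less_inverse_power unfolding remote_def by simp
      then have "\<alpha> * remote s \<le> remote s"
        using alpha_pos alpha_less_one by (simp add: mult_left_le_one_le)
      then show ?thesis using alpha_mult_remote one_less_inverse_power by linarith
    qed
    ultimately show ?thesis using gap_pos by simp
  qed
qed

lemma witness_agent_dist:
  assumes "k \<in> {1..m}"
  shows "linf_pullback (witness_point s) (Inl 1) (Inr k) = fst (witness_point s (Inr k))"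
    and "linf_pullback (witness_point s) (Inl 2) (Inr k) = snd (witness_point s (Inr k))"
proof -
  obtain x y where xy: "witness_point s (Inr k) = (x, y)" by fastforce
  have "witness_point s (Inl 1) = (0, gap s + 1)" "witness_point s (Inl 2) = (gap s + 1, 0)"
    by (simp_all add: witness_point_def)
  with witness_point_bounds[OF assms xy]
  show "linf_pullback (witness_point s) (Inl 1) (Inr k) = fst (witness_point s (Inr k))"
    and "linf_pullback (witness_point s) (Inl 2) (Inr k) = snd (witness_point s (Inr k))"
    by (auto simp: linf_pullback_def xy max_def abs_if split: if_split_asm)
qed

lemma witness_agent1_consistent:
  "agent_consistent \<alpha> m (two_block_sep h 1) (\<lambda>k. fst (witness_point s (Inr k)))"
  unfolding agent_consistent_def
proof (intro ballI conjI impI)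
  fix j assume j: "j \<in> {1..m - 1}"
  let ?x = "\<lambda>k. fst (witness_point s (Inr k))"
  have x: "?x k = \<alpha> ^ (h + 1 - k) * gap s" if "k \<le> 2 * h" for k
    using that by (simp add: witness_point_def)
  show "?x j \<le> \<alpha> * ?x (Suc j)" if "two_block_sep h 1 j"
  proof (cases "j \<le> h")
    case True
    then have "\<alpha> ^ (h + 1 - j) = \<alpha> * \<alpha> ^ (h + 1 - Suc j)"
      by (simp add: Suc_diff_le)
    then show ?thesis using True h_pos x[of j] x[of "Suc j"] by simp
  next
    case False
    then have "j = 2 * h" using that by (simp add: two_block_sep_def)
    then show ?thesis
      using x[of j] h_pos alpha_mult_remote gap_pos one_less_inverse_power
      by (simp add: witness_point_def)
  qed
  assume "\<not> two_block_sep h 1 j"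
  then have "h < j" "Suc j \<le> 2 * h" using j e_le_one by (auto simp: two_block_sep_def)
  then have "?x j = gap s" "?x (Suc j) = gap s" using x by auto
  then show "?x j \<le> ?x (Suc j)" "\<alpha> * ?x (Suc j) < ?x j"
    using gap_pos alpha_less_one by simp_all
qed

lemma witness_agent2_dist_by_position:
  assumes "k \<in> {1..2 * h}"
  shows "snd (witness_point s (Inr (two_block_rank h 2 k))) = 1 / s ^ min (k - 1) h"
proof (cases "k \<le> h")
  case True
  then show ?thesis using assms by (simp add: witness_point_def two_block_rank_def)
next
  case False
  then have "min (k - 1) h = h" by simp
  then show ?thesis using assms False by (simp add: witness_point_def two_block_rank_def)
qed

lemma witness_agent2_consistent:
  "agent_consistent \<alpha> m (two_block_sep h 2) (\<lambda>k. snd (witness_point s (Inr (two_block_rank h 2 k))))"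
  unfolding agent_consistent_def
proof (intro ballI conjI impI)
  fix j assume j: "j \<in> {1..m - 1}"
  let ?y = "\<lambda>k. snd (witness_point s (Inr (two_block_rank h 2 k)))"
  show "?y j \<le> \<alpha> * ?y (Suc j)" if "two_block_sep h 2 j"
  proof -
    have "j = 2 * h" using that by (simp add: two_block_sep_def)
    then have "?y j = 1 / s ^ h" "?y (Suc j) = remote s"
      using witness_agent2_dist_by_position[of j] h_pos
      by (auto simp: witness_point_def two_block_rank_def)
    then show ?thesis using alpha_mult_remote gap_pos by simp
  qed
  assume "\<not> two_block_sep h 2 j"
  then have "Suc j \<le> 2 * h" using j e_le_one by (auto simp: two_block_sep_def)
  then have y: "?y j = 1 / s ^ min (j - 1) h" "?y (Suc j) = 1 / s ^ min j h"
    using j witness_agent2_dist_by_position[of j] witness_agent2_dist_by_position[of "Suc j"]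
    by auto
  show "?y j \<le> ?y (Suc j)" "\<alpha> * ?y (Suc j) < ?y j"
  proof (atomize (full), cases "j \<le> h")
    case True
    then have "min j h = Suc (min (j - 1) h)" using j by auto
    then show "?y j \<le> ?y (Suc j) \<and> \<alpha> * ?y (Suc j) < ?y j"
      unfolding y using inverse_power_step by presburger
  next
    case False
    then show "?y j \<le> ?y (Suc j) \<and> \<alpha> * ?y (Suc j) < ?y j"
      unfolding y using one_less_inverse_power alpha_less_one s_pos
      by (simp add: divide_strict_right_mono)
  qed
qed

lemma witness_alpha_consistent:
  "alpha_consistent \<alpha> {1, 2} m (two_block_rank h) (two_block_sep h) (linf_pullback (witness_point s))"
proof -
  have "agent_consistent \<alpha> m (two_block_sep h 1)
      (\<lambda>k. linf_pullback (witness_point s) (Inl 1) (Inr (two_block_rank h 1 k)))"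
    using witness_agent1_consistent
    by (subst agent_consistent_cong[OF witness_agent_dist(1)]) (auto simp: two_block_rank_def)
  moreover have "agent_consistent \<alpha> m (two_block_sep h 2)
      (\<lambda>k. linf_pullback (witness_point s) (Inl 2) (Inr (two_block_rank h 2 k)))"
    using witness_agent2_consistent
    by (subst agent_consistent_cong[OF witness_agent_dist(2)[OF two_block_rank_in_range]]) auto
  ultimately show ?thesis by (simp add: alpha_consistent_iff_agent_consistent)
qed

lemma witness_cost_ratio:
  "social_cost {1, 2} (linf_pullback (witness_point s)) 1
     / Min (social_cost {1, 2} (linf_pullback (witness_point s)) ` {1..m})
   = ((1 + 2 * t) * (1 / s ^ h) - t) / (1 / s ^ h + t)"
proof -
  let ?c = "social_cost {1, 2} (linf_pullback (witness_point s))"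
  have cost: "?c k = fst (witness_point s (Inr k)) + snd (witness_point s (Inr k))"
    if "k \<in> {1..m}" for k
    using witness_agent_dist[OF that] by (simp add: social_cost_def)
  have "Min (?c ` {1..m}) = gap s + 1"
  proof (rule Min_eqI)
    show "gap s + 1 \<le> c" if "c \<in> ?c ` {1..m}" for c
      using that cost witness_point_bounds by (force simp: prod_eq_iff)
    show "gap s + 1 \<in> ?c ` {1..m}"
      using cost[of "Suc h"] h_pos by (intro image_eqI[of _ _ "Suc h"]) (simp_all add: witness_point_def)
  qed simp
  moreover have "?c 1 = t * gap s + 1 / s ^ h"
    using cost[of 1] h_pos by (simp add: witness_point_def)
  moreover have "(1 + 2 * t) * (1 / s ^ h) - t = (1 + t) * (t * gap s + 1 / s ^ h)"
    and "1 / s ^ h + t = (1 + t) * (gap s + 1)"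
    unfolding inverse_power_eq_gap by (simp_all add: algebra_simps)
  ultimately show ?thesis using t_pos by simp
qed

end

lemma witness_ratio_tendsto:
  "((\<lambda>s. ((1 + 2 * t) * (1 / s ^ h) - t) / (1 / s ^ h + t)) \<longlongrightarrow> distortion_bound t) (at_right \<alpha>)"
proof -
  have "((\<lambda>s. ((1 + 2 * t) * (1 / s ^ h) - t) / (1 / s ^ h + t))
      \<longlongrightarrow> ((1 + 2 * t) * (1 / t) - t) / (1 / t + t)) (at_right \<alpha>)"
  proof (intro tendsto_intros)
    have "0 < 1 / t + t" using t_pos by (intro add_pos_pos) simp_all
    then show "1 / t + t \<noteq> 0" by simp
  qed (use alpha_pos in simp_all)
  moreover have "(1 + 2 * t) * (1 / t) - t = (1 + 2 * t - t\<^sup>2) / t" "1 / t + t = (t\<^sup>2 + 1) / t"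
    using alpha_pos by (simp_all add: field_simps power2_eq_square)
  then have "((1 + 2 * t) * (1 / t) - t) / (1 / t + t) = distortion_bound t"
    using alpha_pos by (simp add: distortion_bound_def)
  ultimately show ?thesis by simp
qed

theorem dist_alpha_two_block:
  "dist_alpha \<alpha> {1, 2} {1..m} (two_block_rank h) (two_block_sep h) 1 = ereal (distortion_bound t)"
  unfolding dist_alpha_def
proof (rule SUP_ereal_eq_tendsto_at_right[where w = "\<lambda>s. linf_pullback (witness_point s)" and b = 1])
  show "social_cost {1, 2} d 1 / Min (social_cost {1, 2} d ` {1..m}) \<le> distortion_bound t"
    if "d \<in> {d. pseudo_metric_on (Inl ` {1, 2} \<union> Inr ` {1..m}) d \<and>
      alpha_consistent \<alpha> {1, 2} (card {1..m}) (two_block_rank h) (two_block_sep h) d}"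
    for d :: "nat + nat \<Rightarrow> nat + nat \<Rightarrow> real"
    using that cost_ratio_le_distortion_bound by simp
  show "linf_pullback (witness_point s) \<in> {d. pseudo_metric_on (Inl ` {1, 2} \<union> Inr ` {1..m}) d \<and>
      alpha_consistent \<alpha> {1, 2} (card {1..m}) (two_block_rank h) (two_block_sep h) d}"
    if "\<alpha> < s" "s < 1" for s
    using that pseudo_metric_on_linf_pullback witness_alpha_consistent by simp
  show "((\<lambda>s. social_cost {1, 2} (linf_pullback (witness_point s)) 1
      / Min (social_cost {1, 2} (linf_pullback (witness_point s)) ` {1..m}))
      \<longlongrightarrow> distortion_bound t) (at_right \<alpha>)"
  proof -
    have "eventually (\<lambda>s. social_cost {1, 2} (linf_pullback (witness_point s)) 1
        / Min (social_cost {1, 2} (linf_pullback (witness_point s)) ` {1..m})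
        = ((1 + 2 * t) * (1 / s ^ h) - t) / (1 / s ^ h + t)) (at_right \<alpha>)"
      using eventually_at_right_real[OF alpha_less_one]
      by eventually_elim (intro witness_cost_ratio; simp)
    from tendsto_cong[OF this] show ?thesis using witness_ratio_tendsto by simp
  qed
qed (rule alpha_less_one)

end

lemma distortion_bound_power:
  "distortion_bound (\<alpha> ^ h) = (1 + 2 * \<alpha> ^ h - \<alpha> ^ (2 * h)) / (\<alpha> ^ (2 * h) + 1)"
  by (simp add: distortion_bound_def power_mult power2_eq_square mult.commute)

theorem lemma7:
  fixes \<alpha> :: real and m :: nat
  assumes "0 < \<alpha>" and "\<alpha> < 1"
  shows "(even m \<and> 2 \<le> m \<longrightarrow>
            dist_alpha \<alpha> {1::nat, 2} {1..m} (ex_pi m) (ex_J m) (1::nat)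
              = ereal ((1 + 2 * \<alpha> ^ (m div 2) - \<alpha> ^ m) / (\<alpha> ^ m + 1))) \<and>
         (odd m \<and> 3 \<le> m \<longrightarrow>
            (\<exists>(N::nat set) (A::nat set) rk J a1. election N A m rk \<and> a1 \<in> A \<and>
               dist_alpha \<alpha> N A rk J a1
                 = ereal ((1 + 2 * \<alpha> ^ ((m - 1) div 2) - \<alpha> ^ (m - 1)) / (\<alpha> ^ (m - 1) + 1))))"
proof (intro conjI impI)
  assume "even m \<and> 2 \<le> m"
  then obtain h where m: "m = 2 * h" and "0 < h" by (auto elim: evenE)
  then have "two_block \<alpha> h 0" using assms by unfold_locales simp_all
  note two_block.dist_alpha_two_block[OF this]
  moreover have "dist_alpha \<alpha> {1, 2} {1..m} (ex_pi m) (ex_J m) 1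
      = dist_alpha \<alpha> {1, 2} {1..m} (two_block_rank h) (two_block_sep h) 1"
    by (rule dist_alpha_cong) (auto simp: m ex_pi_def ex_J_def two_block_rank_def two_block_sep_def)
  ultimately show "dist_alpha \<alpha> {1, 2} {1..m} (ex_pi m) (ex_J m) 1
      = ereal ((1 + 2 * \<alpha> ^ (m div 2) - \<alpha> ^ m) / (\<alpha> ^ m + 1))"
    by (simp add: m distortion_bound_power)
next
  assume "odd m \<and> 3 \<le> m"
  then obtain h where m: "m = 2 * h + 1" and "0 < h" by (auto elim: oddE)
  then have "two_block \<alpha> h 1" using assms by unfold_locales simp_all
  note two_block.dist_alpha_two_block[OF this]
  moreover have "election {1, 2} {1..m} m (two_block_rank h)"
    using bij_betw_two_block_rank[of h m] m by (simp add: election_def)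
  ultimately show "\<exists>(N::nat set) (A::nat set) rk J a1. election N A m rk \<and> a1 \<in> A \<and>
      dist_alpha \<alpha> N A rk J a1
        = ereal ((1 + 2 * \<alpha> ^ ((m - 1) div 2) - \<alpha> ^ (m - 1)) / (\<alpha> ^ (m - 1) + 1))"
    using m by (intro exI[of _ "{1, 2}"] exI[of _ "{1..m}"] exI[of _ 1]) (auto simp: distortion_bound_power)
qed

end
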